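(* Let $n\ge 1$, $0\le w\le n$, and let $U$ be an $n$-qubit Clifford operator that is a product of Clifford operators each of which acts either trivially on the first $w$ qubits or only as the control of a CNOT on them; in particular its symplectic matrix $M\in\mathrm{Sp}(2n,\mathbb{F}_2)$ satisfies $f_iM=f_i$ for all $1\le i\le w$. Then there exist vectors $u_1,\dots,u_{2w}\in\mathbb{F}_2^{2n}$ such that $$M' := M\, S_{u_1} S_{u_2}\cdots S_{u_{2w}}$$ satisfies $e_iM'=e_i$ and $f_iM'=f_i$ for all $1\le i\le w$, and $bM'\in\mathrm{span}\{e_j,f_j : w<j\le n\}$ for every $b\in\{e_j,f_j: w<j\le n\}$. That is, $2w$ Pauli $\pi/4$ rotations suffice to turn $U$ into a Clifford operator (up to Pauli operators and phases) supported only on the last $n-w$ qubits.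
   Context: Paulis and Cliffords are represented in the binary symplectic formalism. An $n$-qubit Pauli operator is identified (up to phase) with a row vector $v\in\mathbb{F}_2^{2n}$ via $P_v=\prod_{i=1}^n X_i^{v_i}Z_i^{v_{n+i}}$. The symplectic form is $\langle u,v\rangle=uJv^T$ with $J=\begin{bmatrix}0&I_n\\ I_n&0\end{bmatrix}$; $P_u,P_v$ commute iff $\langle u,v\rangle=0$. Let $e_1,\dots,e_{2n}$ be the standard basis of $\mathbb{F}_2^{2n}$ and $f_k:=e_{n+k}$ ($e_k$ corresponds to $X_k$, $f_k$ to $Z_k$). A Clifford $U$ is represented (ignoring Pauli corrections and phases) by a matrix $M_U$ with $M_UJM_U^T=J$, acting by $v\mapsto vM_U$ (conjugation $P\mapsto UPU^\dagger$); its $i$-th row is the image of the $i$-th basis vector. The Pauli $\pi/4$ rotation $R_{\pi/4}(P_u)$ maps $P\mapsto PP_u$ if $P$ anticommutes with $P_u$ and fixes $P$ otherwise; in symplectic form it acts as the transvection $E_u(v)=v+\langle u,v\rangle u$, whose matrix (row-vector convention $v\mapsto vS_u$) is denoted $S_u$. *)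

theory Defs
  imports "Jordan_Normal_Form.VS_Connect" "HOL-Library.Z2"
begin

text \<open>Indices are 0-based:
  qubit k (0 \<le> k < n) corresponds to e_k = X_k (index k) and f_k = Z_k (index n+k)
  in F_2^{2n}. Row vectors are JNF vectors of dimension 2n; a matrix M acts on
  row vectors from the right, v \<mapsto> v M.\<close>

definition row_mult :: "bit vec \<Rightarrow> bit mat \<Rightarrow> bit vec" (infixl "\<^sub>r*" 70) where
  "v \<^sub>r* M = transpose_mat M *\<^sub>v v"

definition Jmat :: "nat \<Rightarrow> bit mat" where
  "Jmat n = four_block_mat (0\<^sub>m n n) (1\<^sub>m n) (1\<^sub>m n) (0\<^sub>m n n)"

definition symplectic :: "nat \<Rightarrow> bit mat \<Rightarrow> bool" where
  "symplectic n M \<longleftrightarrow> M \<in> carrier_mat (2*n) (2*n) \<and> M * Jmat n * transpose_mat M = Jmat n"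

definition symp_form :: "nat \<Rightarrow> bit vec \<Rightarrow> bit vec \<Rightarrow> bit" where
  "symp_form n u v = u \<bullet> (Jmat n *\<^sub>v v)"

definition e_vec :: "nat \<Rightarrow> nat \<Rightarrow> bit vec" where
  "e_vec n k = unit_vec (2*n) k"

definition f_vec :: "nat \<Rightarrow> nat \<Rightarrow> bit vec" where
  "f_vec n k = unit_vec (2*n) (n + k)"

text \<open>Transvection matrix S_u, i.e. the (row-convention) matrix of
  E_u(v) = v + <u,v> u, namely S_u = I + (J u^T) u.\<close>
definition transvection :: "nat \<Rightarrow> bit vec \<Rightarrow> bit mat" where
  "transvection n u = mat (2*n) (2*n) (\<lambda>(i,j). (if i = j then 1 else 0) + (Jmat n *\<^sub>v u) $ i * u $ j)"

abbreviation span_bit :: "nat \<Rightarrow> bit vec set \<Rightarrow> bit vec set" where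
  "span_bit N S \<equiv> LinearCombinations.module.span class_ring (module_vec TYPE(bit) N) S"

end

theory Submission
  imports Defs
begin

(* Transvections and M preserve the symplectic form. Suppose the current matrix N fixes
   f_i for i < w and e_i for i < k. Then x = e_k N pairs with all of these vectors exactly as
   e_k does, so two transvections whose axes are orthogonal to them carry x back to e_k while
   keeping them fixed: the axis x + e_k works when <x, e_k> = 1, and otherwise a transvection
   along f_k is applied first. After w such steps M' fixes e_i and f_i for i < w, and for any
   other basis vector b the coordinates of b M' at i and n + i equal <b M', f_i M'> = <b, f_i> = 0
   and <b M', e_i M'> = <b, e_i> = 0, so b M' lies in the span of the last n - w qubits. *)

(* Z2 rewrites + and * on bit to xor and and by default, which defeats ring normalisation. *)
declare add_bit_eq_xor [simp del] mult_bit_eq_and [simp del]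

lemma bit_add_self [simp]: "(x::bit) + x = 0"
  by (cases x) simp_all

lemma Jmat_carrier [simp]: "Jmat n \<in> carrier_mat (2*n) (2*n)"
  unfolding Jmat_def by (auto simp: mult_2)

lemma dim_Jmat [simp]: "dim_row (Jmat n) = 2*n" "dim_col (Jmat n) = 2*n"
  using carrier_matD[OF Jmat_carrier[of n]] by auto

lemma Jmat_mult_vec_carrier [simp]: "v \<in> carrier_vec (2*n) \<Longrightarrow> Jmat n *\<^sub>v v \<in> carrier_vec (2*n)"
  by (rule mult_mat_vec_carrier[OF Jmat_carrier])

lemma Jmat_mult_vec_index:
  assumes v: "v \<in> carrier_vec (2*n)" and i: "i < 2*n"
  shows "(Jmat n *\<^sub>v v) $ i = v $ (if i < n then n+i else i-n)"
proof -
  let ?s = "if i < n then n+i else i-n"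
  have "(Jmat n *\<^sub>v v) $ i = (\<Sum>j\<in>{0..<2*n}. Jmat n $$ (i,j) * v $ j)"
    using v i by (simp add: scalar_prod_def)
  also have "\<dots> = (\<Sum>j\<in>{0..<2*n}. if j = ?s then v $ j else 0)"
    by (rule sum.cong) (use i in \<open>auto simp: Jmat_def index_mat_four_block\<close>)
  also have "\<dots> = v $ ?s"
    using i by auto
  finally show ?thesis .
qed

lemma symp_form_eq_sum:
  assumes u: "u \<in> carrier_vec (2*n)" and v: "v \<in> carrier_vec (2*n)"
  shows "symp_form n u v = (\<Sum>i<n. u$i * v$(n+i) + u$(n+i) * v$i)"
proof -
  let ?g = "\<lambda>i. u $ i * v $ (if i < n then n+i else i-n)"
  have "symp_form n u v = (\<Sum>i\<in>{0..<2*n}. ?g i)"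
    unfolding symp_form_def scalar_prod_def
    by (intro sum.cong) (use v in \<open>auto simp: Jmat_mult_vec_index simp del: index_mult_mat_vec\<close>)
  also have "\<dots> = (\<Sum>i\<in>{0..<n}. ?g i) + (\<Sum>i\<in>{n..<n+n}. ?g i)"
    unfolding mult_2 by (rule sum.atLeastLessThan_concat[symmetric]) auto
  also have "(\<Sum>i\<in>{n..<n+n}. ?g i) = (\<Sum>i<n. u $ (n+i) * v $ i)"
    using sum.shift_bounds_nat_ivl[of ?g 0 n n] by (simp add: add.commute atLeast0LessThan)
  finally show ?thesis
    by (simp add: sum.distrib atLeast0LessThan)
qed

lemma symp_form_commute:
  assumes "u \<in> carrier_vec (2*n)" and "v \<in> carrier_vec (2*n)"
  shows "symp_form n u v = symp_form n v u"
  unfolding symp_form_eq_sum[OF assms] symp_form_eq_sum[OF assms(2,1)]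
  by (simp add: ac_simps)

lemma symp_form_self [simp]:
  assumes "u \<in> carrier_vec (2*n)"
  shows "symp_form n u u = 0"
  unfolding symp_form_eq_sum[OF assms assms] by (simp add: mult.commute)

lemma symp_form_add_right:
  assumes "u \<in> carrier_vec (2*n)" and "v \<in> carrier_vec (2*n)" and "w \<in> carrier_vec (2*n)"
  shows "symp_form n u (v + w) = symp_form n u v + symp_form n u w"
  using assms unfolding symp_form_def
  by (simp add: mult_add_distrib_mat_vec[OF Jmat_carrier] scalar_prod_add_distrib[of _ "2*n"])

lemma symp_form_add_left:
  assumes "u \<in> carrier_vec (2*n)" and "v \<in> carrier_vec (2*n)" and "w \<in> carrier_vec (2*n)"
  shows "symp_form n (u + v) w = symp_form n u w + symp_form n v w"
  using assms by (simp add: symp_form_commute[of _ n w] symp_form_add_right)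

lemma symp_form_smult_right:
  assumes "u \<in> carrier_vec (2*n)" and "v \<in> carrier_vec (2*n)"
  shows "symp_form n u (c \<cdot>\<^sub>v v) = c * symp_form n u v"
  using assms unfolding symp_form_def
  by (simp add: mult_mat_vec[OF Jmat_carrier] scalar_prod_smult_distrib[of _ "2*n"])

lemma symp_form_smult_left:
  assumes "u \<in> carrier_vec (2*n)" and "v \<in> carrier_vec (2*n)"
  shows "symp_form n (c \<cdot>\<^sub>v u) v = c * symp_form n u v"
  using assms by (simp add: symp_form_commute[of _ n v] symp_form_smult_right)

lemma symp_form_zero_right [simp]:
  assumes "u \<in> carrier_vec (2*n)"
  shows "symp_form n u (0\<^sub>v (2*n)) = 0"
  using assms by (simp add: symp_form_eq_sum)

lemma e_vec_carrier [simp]: "e_vec n j \<in> carrier_vec (2*n)"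
  unfolding e_vec_def by simp

lemma f_vec_carrier [simp]: "f_vec n j \<in> carrier_vec (2*n)"
  unfolding f_vec_def by simp

lemma e_vec_index [simp]: "i < 2*n \<Longrightarrow> e_vec n j $ i = (if i = j then 1 else 0)"
  unfolding e_vec_def unit_vec_def by simp

lemma f_vec_index [simp]: "i < 2*n \<Longrightarrow> f_vec n j $ i = (if i = n + j then 1 else 0)"
  unfolding f_vec_def unit_vec_def by simp

lemma symp_form_f_vec_right:
  assumes "v \<in> carrier_vec (2*n)" and "j < n"
  shows "symp_form n v (f_vec n j) = v $ j"
  using assms by (simp add: symp_form_eq_sum f_vec_def flip: of_bool_def)

lemma symp_form_e_vec_right:
  assumes "v \<in> carrier_vec (2*n)" and "j < n"
  shows "symp_form n v (e_vec n j) = v $ (n+j)"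
  using assms by (simp add: symp_form_eq_sum e_vec_def flip: of_bool_def)

lemma row_mult_carrier [simp]:
  "N \<in> carrier_mat a b \<Longrightarrow> v \<in> carrier_vec a \<Longrightarrow> v \<^sub>r* N \<in> carrier_vec b"
  unfolding row_mult_def by simp

lemma row_mult_mult:
  assumes "A \<in> carrier_mat a b" and "B \<in> carrier_mat b c" and "v \<in> carrier_vec a"
  shows "v \<^sub>r* (A * B) = v \<^sub>r* A \<^sub>r* B"
  unfolding row_mult_def using assms by (simp add: transpose_mult[OF assms(1,2)])

lemma transvection_carrier [simp]: "transvection n u \<in> carrier_mat (2*n) (2*n)"
  unfolding transvection_def by simp

lemma dim_transvection [simp]:
  "dim_row (transvection n u) = 2*n" "dim_col (transvection n u) = 2*n"
  unfolding transvection_def by simp_all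

lemma row_mult_transvection:
  assumes u: "u \<in> carrier_vec (2*n)" and v: "v \<in> carrier_vec (2*n)"
  shows "v \<^sub>r* transvection n u = v + symp_form n v u \<cdot>\<^sub>v u"
proof (rule eq_vecI)
  fix j assume "j < dim_vec (v + symp_form n v u \<cdot>\<^sub>v u)"
  then have j: "j < 2*n" using u by simp
  have "(v \<^sub>r* transvection n u) $ j = (\<Sum>i\<in>{0..<2*n}. transvection n u $$ (i, j) * v $ i)"
    using j v by (simp add: row_mult_def scalar_prod_def)
  also have "\<dots> = (\<Sum>i\<in>{0..<2*n}. (of_bool (i = j) + (Jmat n *\<^sub>v u) $ i * u $ j) * v $ i)"
    using j by (intro sum.cong) (auto simp: transvection_def of_bool_def)
  also have "\<dots> = (\<Sum>i\<in>{0..<2*n}. (if i = j then v $ i else 0) + u $ j * (v $ i * (Jmat n *\<^sub>v u) $ i))"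
    by (intro sum.cong) (simp_all add: algebra_simps)
  also have "\<dots> = v $ j + u $ j * (\<Sum>i\<in>{0..<2*n}. v $ i * (Jmat n *\<^sub>v u) $ i)"
    using j by (simp only: sum.distrib sum_distrib_left) simp
  also have "\<dots> = (v + symp_form n v u \<cdot>\<^sub>v u) $ j"
    using j u v by (simp add: symp_form_def scalar_prod_def mult.commute)
  finally show "(v \<^sub>r* transvection n u) $ j = (v + symp_form n v u \<cdot>\<^sub>v u) $ j" .
qed (use u v in \<open>simp add: row_mult_def\<close>)

lemma row_mult_transvection_orthogonal:
  assumes "u \<in> carrier_vec (2*n)" and "v \<in> carrier_vec (2*n)" and "symp_form n v u = 0"
  shows "v \<^sub>r* transvection n u = v"
  using assms by (auto simp: row_mult_transvection intro!: eq_vecI)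

lemma row_mult_transvection_sum:
  assumes x: "x \<in> carrier_vec (2*n)" and y: "y \<in> carrier_vec (2*n)" and "symp_form n x y = 1"
  shows "x \<^sub>r* transvection n (x + y) = y"
proof -
  have "symp_form n x (x + y) = 1"
    using assms by (simp add: symp_form_add_right)
  then show ?thesis
    using x y by (intro eq_vecI) (simp_all add: row_mult_transvection add.assoc[symmetric])
qed

lemma symp_form_row_mult_transvection:
  assumes u: "u \<in> carrier_vec (2*n)" and v: "v \<in> carrier_vec (2*n)" and w: "w \<in> carrier_vec (2*n)"
  shows "symp_form n (v \<^sub>r* transvection n u) (w \<^sub>r* transvection n u) = symp_form n v w"
proof -
  define a b where "a = symp_form n v u" and "b = symp_form n w u"
  have "symp_form n u w = b"
    using u w by (simp add: b_def symp_form_commute)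
  then have "symp_form n (v + a \<cdot>\<^sub>v u) (w + b \<cdot>\<^sub>v u) = symp_form n v w + (b * a + a * b)"
    using u v w by (simp add: symp_form_add_left symp_form_add_right symp_form_smult_left
        symp_form_smult_right a_def[symmetric] algebra_simps)
  also have "\<dots> = symp_form n v w"
    by (simp add: mult.commute)
  finally show ?thesis
    using u v w by (simp add: row_mult_transvection a_def b_def)
qed

definition symp_preserving :: "nat \<Rightarrow> bit mat \<Rightarrow> bool" where
  "symp_preserving n N \<longleftrightarrow> N \<in> carrier_mat (2*n) (2*n) \<and>
     (\<forall>x\<in>carrier_vec (2*n). \<forall>y\<in>carrier_vec (2*n). symp_form n (x \<^sub>r* N) (y \<^sub>r* N) = symp_form n x y)"

lemma symp_preserving_carrier: "symp_preserving n N \<Longrightarrow> N \<in> carrier_mat (2*n) (2*n)"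
  by (simp add: symp_preserving_def)

lemma symplectic_imp_symp_preserving:
  assumes "symplectic n M"
  shows "symp_preserving n M"
  unfolding symp_preserving_def
proof (intro conjI ballI)
  have M: "M \<in> carrier_mat (2*n) (2*n)" and MJ: "M * Jmat n * transpose_mat M = Jmat n"
    using assms unfolding symplectic_def by auto
  then show "M \<in> carrier_mat (2*n) (2*n)" by simp
  fix x y :: "bit vec" assume x: "x \<in> carrier_vec (2*n)" and y: "y \<in> carrier_vec (2*n)"
  have "symp_form n (x \<^sub>r* M) (y \<^sub>r* M) = x \<bullet> (M *\<^sub>v (Jmat n *\<^sub>v (transpose_mat M *\<^sub>v y)))"
    unfolding symp_form_def row_mult_def using M y by (simp add: transpose_vec_mult_scalar[OF M _ x])
  also have "M *\<^sub>v (Jmat n *\<^sub>v (transpose_mat M *\<^sub>v y)) = (M * Jmat n * transpose_mat M) *\<^sub>v y"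
    using M y by (simp add: assoc_mult_mat_vec[OF mult_carrier_mat[OF M Jmat_carrier]]
        assoc_mult_mat_vec[OF M Jmat_carrier])
  finally show "symp_form n (x \<^sub>r* M) (y \<^sub>r* M) = symp_form n x y"
    unfolding MJ symp_form_def .
qed

lemma symp_preserving_transvection:
  assumes "u \<in> carrier_vec (2*n)"
  shows "symp_preserving n (transvection n u)"
  using assms by (simp add: symp_preserving_def symp_form_row_mult_transvection)

lemma symp_preserving_mult:
  assumes "symp_preserving n A" and "symp_preserving n B"
  shows "symp_preserving n (A * B)"
  using assms unfolding symp_preserving_def by (auto simp: row_mult_mult[of _ "2*n" "2*n"])

lemma symp_form_row_mult_fixed:
  assumes "symp_preserving n N" and "x \<in> carrier_vec (2*n)" and "v \<in> carrier_vec (2*n)"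
    and "v \<^sub>r* N = v"
  shows "symp_form n (x \<^sub>r* N) v = symp_form n x v"
  using assms unfolding symp_preserving_def by metis

lemma two_transvections_map_to:
  assumes x: "x \<in> carrier_vec (2*n)" and y: "y \<in> carrier_vec (2*n)" and z: "z \<in> carrier_vec (2*n)"
    and V: "V \<subseteq> carrier_vec (2*n)"
    and agree: "\<forall>v\<in>V. symp_form n x v = symp_form n y v"
    and z_orth: "\<forall>v\<in>V. symp_form n v z = 0"
    and xz: "symp_form n x z = 1" and zy: "symp_form n z y = 1"
  shows "\<exists>u1 u2. u1 \<in> carrier_vec (2*n) \<and> u2 \<in> carrier_vec (2*n) \<and>
    (\<forall>v\<in>V. symp_form n v u1 = 0 \<and> symp_form n v u2 = 0) \<and>
    x \<^sub>r* transvection n u1 \<^sub>r* transvection n u2 = y"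
proof -
  have one_step: "(\<forall>v\<in>V. symp_form n v (x' + y) = 0) \<and> x' \<^sub>r* transvection n (x' + y) = y"
    if x': "x' \<in> carrier_vec (2*n)" and agree': "\<forall>v\<in>V. symp_form n x' v = symp_form n y v"
      and "symp_form n x' y = 1" for x'
  proof (intro conjI ballI)
    fix v assume "v \<in> V"
    then show "symp_form n v (x' + y) = 0"
      using V x' y agree' by (auto simp: symp_form_add_right symp_form_commute[of v])
  qed (use that y in \<open>simp add: row_mult_transvection_sum\<close>)
  show ?thesis
  proof (cases "symp_form n x y = 1")
    case True
    then show ?thesis
      using one_step[OF x agree] x y V
      by (intro exI[of _ "0\<^sub>v (2*n)"] exI[of _ "x + y"])
        (auto simp: row_mult_transvection_orthogonal subset_iff)
  next
    case False
    txt \<open>A preliminary transvection along z turns x into x + z, which pairs with y to 1.\<close>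
    define x' where "x' = x + z"
    have x': "x' \<in> carrier_vec (2*n)" and xx': "x \<^sub>r* transvection n z = x'"
      using x z xz by (simp_all add: x'_def row_mult_transvection)
    have agree': "\<forall>v\<in>V. symp_form n x' v = symp_form n y v"
      using x z V agree z_orth by (auto simp: x'_def symp_form_add_left symp_form_commute[of z])
    have "symp_form n x' y = 1"
      using x y z False zy by (simp add: x'_def symp_form_add_left)
    then show ?thesis
      using one_step[OF x' agree'] z z_orth x' y xx'
      by (intro exI[of _ z] exI[of _ "x' + y"]) auto
  qed
qed

definition prefix_paulis :: "nat \<Rightarrow> nat \<Rightarrow> nat \<Rightarrow> bit vec set" where
  "prefix_paulis n w k = f_vec n ` {..<w} \<union> e_vec n ` {..<k}"

lemma prefix_paulis_carrier: "prefix_paulis n w k \<subseteq> carrier_vec (2*n)"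
  unfolding prefix_paulis_def by auto

lemma two_transvections_fix_next_e_vec:
  assumes N: "symp_preserving n N" and fixed: "\<forall>v\<in>prefix_paulis n w k. v \<^sub>r* N = v"
    and "k < w" and "w \<le> n"
  shows "\<exists>u1 u2. u1 \<in> carrier_vec (2*n) \<and> u2 \<in> carrier_vec (2*n) \<and>
    (\<forall>v\<in>prefix_paulis n w (Suc k). v \<^sub>r* (N * transvection n u1 * transvection n u2) = v)"
proof -
  let ?V = "prefix_paulis n w k" and ?x = "e_vec n k \<^sub>r* N"
  note Nc = symp_preserving_carrier[OF N]
  have agree: "\<forall>v\<in>?V. symp_form n ?x v = symp_form n (e_vec n k) v"
    using fixed prefix_paulis_carrier e_vec_carrier by (blast intro: symp_form_row_mult_fixed[OF N])
  have fk_orth: "\<forall>v\<in>?V. symp_form n v (f_vec n k) = 0"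
    using assms by (auto simp: prefix_paulis_def symp_form_f_vec_right)
  have "f_vec n k \<in> ?V"
    using \<open>k < w\<close> by (simp add: prefix_paulis_def)
  then have xf: "symp_form n ?x (f_vec n k) = 1"
    using agree assms by (simp add: symp_form_f_vec_right)
  have fe: "symp_form n (f_vec n k) (e_vec n k) = 1"
    using assms by (simp add: symp_form_e_vec_right)
  obtain u1 u2 where u: "u1 \<in> carrier_vec (2*n)" "u2 \<in> carrier_vec (2*n)"
    and orth: "\<forall>v\<in>?V. symp_form n v u1 = 0 \<and> symp_form n v u2 = 0"
    and to_e: "?x \<^sub>r* transvection n u1 \<^sub>r* transvection n u2 = e_vec n k"
    using two_transvections_map_to[OF _ _ _ prefix_paulis_carrier agree fk_orth xf fe] Nc by auto
  have row_mult_N': "v \<^sub>r* (N * transvection n u1 * transvection n u2)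
      = v \<^sub>r* N \<^sub>r* transvection n u1 \<^sub>r* transvection n u2" if "v \<in> carrier_vec (2*n)" for v
    using that Nc by (simp add: row_mult_mult[of _ "2*n" "2*n" _ "2*n"])
  have "v \<^sub>r* (N * transvection n u1 * transvection n u2) = v" if "v \<in> ?V" for v
  proof -
    have "v \<in> carrier_vec (2*n)"
      using that prefix_paulis_carrier by blast
    then show ?thesis
      using that fixed orth u by (simp add: row_mult_N' row_mult_transvection_orthogonal)
  qed
  moreover have "prefix_paulis n w (Suc k) = insert (e_vec n k) ?V"
    by (auto simp: prefix_paulis_def lessThan_Suc)
  ultimately show ?thesis
    using u to_e row_mult_N'[OF e_vec_carrier] by (intro exI[of _ u1] exI[of _ u2]) auto
qed

lemma transvections_fix_prefix_paulis:
  assumes "symplectic n M" and "\<forall>i<w. f_vec n i \<^sub>r* M = f_vec n i" and "w \<le> n" and "k \<le> w"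
  shows "\<exists>us. length us = 2*k \<and> (\<forall>u\<in>set us. u \<in> carrier_vec (2*n)) \<and>
    symp_preserving n (foldl (*) M (map (transvection n) us)) \<and>
    (\<forall>v\<in>prefix_paulis n w k. v \<^sub>r* foldl (*) M (map (transvection n) us) = v)"
  using \<open>k \<le> w\<close>
proof (induction k)
  case 0
  then show ?case
    using assms by (intro exI[of _ "[]"]) (auto simp: prefix_paulis_def symplectic_imp_symp_preserving)
next
  case (Suc k)
  then obtain us where us: "length us = 2*k" "\<forall>u\<in>set us. u \<in> carrier_vec (2*n)"
    and N: "symp_preserving n (foldl (*) M (map (transvection n) us))"
    and fixed: "\<forall>v\<in>prefix_paulis n w k. v \<^sub>r* foldl (*) M (map (transvection n) us) = v"
    by auto
  obtain u1 u2 where u: "u1 \<in> carrier_vec (2*n)" "u2 \<in> carrier_vec (2*n)"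
    and fixed': "\<forall>v\<in>prefix_paulis n w (Suc k).
      v \<^sub>r* (foldl (*) M (map (transvection n) us) * transvection n u1 * transvection n u2) = v"
    using two_transvections_fix_next_e_vec[OF N fixed] Suc.prems assms(3) by auto
  show ?case
    using us u N fixed'
    by (intro exI[of _ "us @ [u1, u2]"])
      (simp add: symp_preserving_mult symp_preserving_transvection)
qed

lemma row_mult_keeps_prefix_coords:
  assumes N: "symp_preserving n N" and fixed: "\<forall>v\<in>prefix_paulis n w w. v \<^sub>r* N = v"
    and "w \<le> n" and b: "b \<in> carrier_vec (2*n)" and "i < w"
  shows "(b \<^sub>r* N) $ i = b $ i" and "(b \<^sub>r* N) $ (n+i) = b $ (n+i)"
proof -
  have bN: "b \<^sub>r* N \<in> carrier_vec (2*n)"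
    using row_mult_carrier[OF symp_preserving_carrier[OF N] b] .
  have i: "i < n"
    using assms by simp
  have "f_vec n i \<in> prefix_paulis n w w" and "e_vec n i \<in> prefix_paulis n w w"
    using \<open>i < w\<close> by (auto simp: prefix_paulis_def)
  then have "symp_form n (b \<^sub>r* N) (f_vec n i) = symp_form n b (f_vec n i)"
    and "symp_form n (b \<^sub>r* N) (e_vec n i) = symp_form n b (e_vec n i)"
    using fixed by (auto intro!: symp_form_row_mult_fixed[OF N b])
  then show "(b \<^sub>r* N) $ i = b $ i" and "(b \<^sub>r* N) $ (n+i) = b $ (n+i)"
    using b bN i by (simp_all add: symp_form_f_vec_right symp_form_e_vec_right)
qed

lemma (in vec_space) in_span_unit_vec_image:
  assumes y: "y \<in> carrier_vec n" and K: "K \<subseteq> {..<n}"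
    and zero: "\<forall>i<n. i \<notin> K \<longrightarrow> y $ i = 0"
  shows "y \<in> span (unit_vec n ` K)"
proof -
  let ?S = "unit_vec n ` K"
  have fin: "finite ?S" and S: "?S \<subseteq> carrier_vec n"
    using K finite_subset by auto
  have inj: "inj_on (unit_vec n) K"
    using K by (auto intro!: inj_onI)
  have "lincomb (\<lambda>x. y \<bullet> x) ?S = y"
  proof (rule eq_vecI)
    fix i assume "i < dim_vec y"
    then have i: "i < n" using y by simp
    have "lincomb (\<lambda>x. y \<bullet> x) ?S $ i = (\<Sum>k\<in>K. y $ k * unit_vec n k $ i)"
      using K by (simp add: lincomb_index[OF i S] sum.reindex[OF inj] subset_iff)
    also have "\<dots> = (\<Sum>k\<in>K. if k = i then y $ k else 0)"
      using K i by (intro sum.cong) auto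
    also have "\<dots> = y $ i"
      using K i zero finite_subset[OF K] by (auto simp: sum.delta)
    finally show "lincomb (\<lambda>x. y \<bullet> x) ?S $ i = y $ i" .
  qed (use y lincomb_dim[OF fin S] in simp)
  then show ?thesis
    using finite_span[OF fin S] by (auto intro!: exI[of _ "(\<bullet>) y"])
qed

lemma suffix_paulis_eq_unit_vecs:
  "{e_vec n j | j. w \<le> j \<and> j < n} \<union> {f_vec n j | j. w \<le> j \<and> j < n}
    = unit_vec (2*n) ` ({w..<n} \<union> {n+w..<2*n})"
proof -
  have "{e_vec n j | j. w \<le> j \<and> j < n} = unit_vec (2*n) ` {w..<n}"
    by (auto simp: e_vec_def)
  moreover have "{f_vec n j | j. w \<le> j \<and> j < n} = unit_vec (2*n) ` {n+w..<2*n}"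
    by (auto simp: f_vec_def) presburger
  ultimately show ?thesis
    by (simp add: image_Un)
qed

lemma row_mult_suffix_paulis_in_span:
  assumes N: "symp_preserving n N" and fixed: "\<forall>v\<in>prefix_paulis n w w. v \<^sub>r* N = v"
    and "w \<le> n"
    and "b \<in> {e_vec n j | j. w \<le> j \<and> j < n} \<union> {f_vec n j | j. w \<le> j \<and> j < n}"
  shows "b \<^sub>r* N \<in> span_bit (2*n) ({e_vec n j | j. w \<le> j \<and> j < n} \<union> {f_vec n j | j. w \<le> j \<and> j < n})"
proof -
  define K where "K = {w..<n} \<union> {n+w..<2*n}"
  have b: "b \<in> carrier_vec (2*n)" and b_zero: "\<forall>i<2*n. i \<notin> K \<longrightarrow> b $ i = 0"
    using assms(4) by (auto simp: suffix_paulis_eq_unit_vecs K_def)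
  show ?thesis
    unfolding suffix_paulis_eq_unit_vecs K_def[symmetric]
  proof (rule vec_space.in_span_unit_vec_image)
    show "b \<^sub>r* N \<in> carrier_vec (2*n)"
      using row_mult_carrier[OF symp_preserving_carrier[OF N] b] .
    show "K \<subseteq> {..<2*n}"
      by (auto simp: K_def)
    show "\<forall>i<2*n. i \<notin> K \<longrightarrow> (b \<^sub>r* N) $ i = 0"
    proof (intro allI impI)
      fix i assume "i < 2*n" and "i \<notin> K"
      then consider "i < w" | j where "j < w" "i = n + j"
        by (auto simp: K_def) (metis add_diff_inverse_nat)
      then show "(b \<^sub>r* N) $ i = 0"
        by cases (use row_mult_keeps_prefix_coords[OF N fixed \<open>w \<le> n\<close> b] b_zero
            \<open>i < 2*n\<close> \<open>i \<notin> K\<close> in auto)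
    qed
  qed
qed

theorem lemmaA2:
  fixes n w :: nat and M :: "bit mat"
  assumes "1 \<le> n" and "w \<le> n"
    and "symplectic n M"
    and "\<forall>i<w. f_vec n i \<^sub>r* M = f_vec n i"
  shows "\<exists>us :: bit vec list. length us = 2*w \<and> (\<forall>u\<in>set us. u \<in> carrier_vec (2*n)) \<and>
    (let M' = foldl (*) M (map (transvection n) us) in
      (\<forall>i<w. e_vec n i \<^sub>r* M' = e_vec n i \<and> f_vec n i \<^sub>r* M' = f_vec n i) \<and>
      (\<forall>b\<in>{e_vec n j | j. w \<le> j \<and> j < n} \<union> {f_vec n j | j. w \<le> j \<and> j < n}.
         b \<^sub>r* M' \<in> span_bit (2*n) ({e_vec n j | j. w \<le> j \<and> j < n} \<union> {f_vec n j | j. w \<le> j \<and> j < n})))"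
proof -
  obtain us where us: "length us = 2*w" "\<forall>u\<in>set us. u \<in> carrier_vec (2*n)"
    and N: "symp_preserving n (foldl (*) M (map (transvection n) us))"
    and fixed: "\<forall>v\<in>prefix_paulis n w w. v \<^sub>r* foldl (*) M (map (transvection n) us) = v"
    using transvections_fix_prefix_paulis[OF assms(3,4,2) le_refl] by blast
  show ?thesis
    using us fixed row_mult_suffix_paulis_in_span[OF N fixed assms(2)]
    by (intro exI[of _ us]) (auto simp: Let_def prefix_paulis_def)
qed

end
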